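(* For $t\in(0,1)$ put $c_t:=\frac{4}{4t-t^3}$ and $$K_t(z,P):=\frac{z-\tilde Z(P)}{\bar z-Z(P)}\,e^{-c_t\cosh\mathrm{dist}(z,P)},\qquad z\in\mathbb H,\ P\in\mathcal G_1.$$ Then: (1) $\Phi_t(z,P)=\log K_t(z,P)$ admits a single-valued (continuous) branch for $z\in\mathbb H$, $P\in\mathcal G_1$; (2) for fixed $z\in\mathbb H$ and $\theta\in\mathbb R/2\pi\mathbb Z$, $\max_{P\in\Sigma_{t,\theta}}|K_t(z,P)|$ is attained at $P=h_{-it}(z,\theta)$; (3) for fixed $z_0\in\mathbb H$ and $\theta$, the Hessian matrix with respect to $(x,y)$ of $(x,y)\mapsto\Re\Phi_t(z_0,h_{-it}(x+iy,\theta))$ is non-degenerate at $x+iy=z_0$.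
   Context: $\mathbb H=\{x+iy:y>0\}$ hyperbolic plane; $\mathbb H^{\mathbb C}=\mathbb C\times\mathbb C\ni P=(X(P),Y(P))$, $\mathbb H$ embedded as real points $(x,y)$, $y>0$; $Z(P):=X(P)+iY(P)$, $\tilde Z(P):=X(P)-iY(P)$. For $z=x+iy\in\mathbb H$ and $P$ with $Y(P)\ne0$, $\cosh\mathrm{dist}(z,P):=1+\frac{(x-X(P))^2+(y-Y(P))^2}{2yY(P)}$ (holomorphic in $P$). Horocycles: for $z=x+iy\in\mathbb H$, $\theta\in\mathbb R/2\pi\mathbb Z$, $h_t(z,\theta)$ ($t$ real) is the point at time $t$ of the unique unit-speed right horocycle (image of $t\mapsto -t+i$ under an orientation-preserving isometry) starting at $z$ with velocity $y(\cos\theta\partial_x+\sin\theta\partial_y)$, written as $(\Re,\Im)\in\mathbb R^2$; it extends holomorphically in $t$ to $|\Im t|<1$ with values in $\mathbb C^2$. $\mathcal G_1:=\{h_{-is}(z,\theta): s\in[0,1),z\in\mathbb H,\theta\}$ (an open neighbourhood of $\mathbb H$ in $\mathbb C^2$), and $\Sigma_{t,\theta}:=\{h_{-it}(z,\theta):z\in\mathbb H\}$. *)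

theory Defs
  imports "HOL-Analysis.Analysis"
begin

text \<open>Points of the complexified hyperbolic plane are pairs P = (X P, Y P) of complex numbers.\<close>

type_synonym cpt = "complex \<times> complex"

definition Hpl :: "complex set" where
  "Hpl = {z. Im z > 0}"

definition ZZ :: "cpt \<Rightarrow> complex" where
  "ZZ P = fst P + \<i> * snd P"

definition ZZt :: "cpt \<Rightarrow> complex" where
  "ZZt P = fst P - \<i> * snd P"

definition coshdist :: "complex \<Rightarrow> cpt \<Rightarrow> complex" where
  "coshdist z P = 1 + ((of_real (Re z) - fst P)\<^sup>2 + (of_real (Im z) - snd P)\<^sup>2)
                       / (2 * of_real (Im z) * snd P)"

text \<open>Unit speed right horocycle through z with initial velocity y(cos th d_x + sin th d_y):
  for real t the point is z + w(t) with
  w(t) = i y (t(1 - e^{i th}) - 2i) / (t(1 + e^{i th}) - 2i)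
  (this is g(-t+i) for the orientation preserving isometry g with g(i) = z,
  g'(i)(-1) = y e^{i th}).  Its real coordinates are X = Re z + Re w, Y = Im w; the
  holomorphic extension in t replaces the conjugate of w(t) by the function with conjugated
  coefficients, which is holomorphic for |Im t| < 1.\<close>
definition hor :: "complex \<Rightarrow> real \<Rightarrow> complex \<Rightarrow> cpt" where
  "hor z th t =
     (let e = cis th;
          w  = \<i> * of_real (Im z) * (t * (1 - e) - 2 * \<i>) / (t * (1 + e) - 2 * \<i>);
          w' = - \<i> * of_real (Im z) * (t * (1 - cnj e) + 2 * \<i>) / (t * (1 + cnj e) + 2 * \<i>)
      in (of_real (Re z) + (w + w') / 2, (w - w') / (2 * \<i>)))"

definition G1 :: "cpt set" where
  "G1 = {hor z th (- \<i> * of_real s) | z th s. s \<in> {0..<1} \<and> z \<in> Hpl}"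

definition Sigma_ht :: "real \<Rightarrow> real \<Rightarrow> cpt set" where
  "Sigma_ht t th = {hor z th (- \<i> * of_real t) | z. z \<in> Hpl}"

definition ct :: "real \<Rightarrow> real" where
  "ct t = 4 / (4 * t - t ^ 3)"

definition Kt :: "real \<Rightarrow> complex \<Rightarrow> cpt \<Rightarrow> complex" where
  "Kt t z P = (z - ZZt P) / (cnj z - ZZ P) * exp (- of_real (ct t) * coshdist z P)"

definition nondeg_hessian_at :: "(real \<times> real \<Rightarrow> real) \<Rightarrow> real \<times> real \<Rightarrow> bool" where
  "nondeg_hessian_at g p \<longleftrightarrow>
     (\<exists>D :: real \<times> real \<Rightarrow> ((real \<times> real) \<Rightarrow>\<^sub>L real).
      \<exists>H :: real \<times> real \<Rightarrow> ((real \<times> real) \<Rightarrow>\<^sub>L real).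
        (\<forall>\<^sub>F q in nhds p. (g has_derivative blinfun_apply (D q)) (at q)) \<and>
        (D has_derivative H) (at p) \<and>
        blinfun_apply (H (1,0)) (1,0) * blinfun_apply (H (0,1)) (0,1)
          - blinfun_apply (H (1,0)) (0,1) * blinfun_apply (H (0,1)) (1,0) \<noteq> 0)"

end

(* Write P = h_{-is}(z', th).  Its endpoints Z P, Z~ P are Re z' + Im z' rot_th(i(1 + s)) and
   Re z' + Im z' rot_th(-i(1 - s)), where rot_th is the rotation about i carrying the horocycle
   -t + i to the horocycle of direction th.  Since cosh dist(z, P) is a cross ratio of
   z, conj z, Z P, Z~ P, the kernel is invariant under real affine maps and changes under real
   Moebius maps only by a factor depending on the endpoints; hence
     |K_s(z, P)| = C_th exp (model_log s w),   w = rot_th^-1 ((z - Re z') / Im z'),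
   where model_log s is the log-modulus of the kernel at the reference point with endpoints
   i(1 + s), -i(1 - s).  The maximum statement becomes model_log s w <= model_log s i, an
   elementary inequality obtained from ln x <= x - 1, ln x <= 2(x - 1)/(x + 1) and two polynomial
   inequalities.  The branch of the logarithm is Ln(z - Z~ P) - Ln(conj z - Z P) - c_t cosh dist,
   continuous because Im (z - Z~ P) > 0 > Im (conj z - Z P).  Finally Re Phi = ln C_th + model_log t
   composed with w; model_log t has a critical point at i with negative definite diagonal Hessian,
   and the differential of w at z0 is conformal, so the Hessian stays non-degenerate. *)

theory Submission
  imports Defs "HOL-Library.Sum_of_Squares"
begin

lemma ln_le_pade:
  fixes x :: real
  assumes "0 < x" "x \<le> 1"
  shows "ln x \<le> 2 * (x - 1) / (x + 1)"
proof -
  define f where "f y = ln y - 2 * (y - 1) / (y + 1)" for y :: real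
  have "f x \<le> f 1"
  proof (rule DERIV_nonneg_imp_increasing_open[OF assms(2)])
    fix y :: real
    assume y: "x < y" "y < 1"
    hence yp: "0 < y" using assms by linarith
    have "DERIV f y :> 1 / y - 4 / (y + 1)^2"
      unfolding f_def using yp
      by (auto intro!: derivative_eq_intros simp: power2_eq_square field_simps)
    moreover have "4 / (y + 1)^2 \<le> 1 / y"
    proof -
      have "4 * y \<le> (y + 1)^2" using zero_le_power2[of "y - 1"]
        by (simp add: power2_eq_square algebra_simps)
      thus ?thesis using yp by (simp add: field_simps)
    qed
    ultimately show "\<exists>d. DERIV f y :> d \<and> 0 \<le> d" by auto
  next
    show "continuous_on {x..1} f" unfolding f_def using assms
      by (intro continuous_intros) auto
  qed
  thus ?thesis by (simp add: f_def)
qed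

text \<open>In ln_kernel_ineq below (U = (Re w)^2, v = Im w) the logarithm is estimated by
  ln x \<le> x - 1 when G = 2U + (v - 1)(2v + 2 - s^2) \<ge> 0 and by ln_le_pade when G \<le> 0 (so v \<le> 1);
  what remains are the following polynomial inequalities, each proved by writing the difference
  as a sum of manifestly nonnegative terms.\<close>

lemma kernel_poly_ineq_v_ge_1:
  fixes U v s :: real
  assumes U: "0 \<le> U" and v: "1 \<le> v" and s: "0 < s" "s < 1"
  shows "s^2 * (4 - s^2) * v * (2 * U + (v - 1) * (2 * v + 2 - s^2))
     \<le> (U + (v + 1 + s)^2) * (2 - s)^2 * (U + (v - 1) * (v - 1 + s^2))"
proof -
  define r where "r = v - 1"
  have r: "0 \<le> r" using v r_def by simp
  define p1 where "p1 = 3 * s^4 - 2 * s^3 - 8 * s^2 - 8 * s + 16"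
  define p2 where "p2 = 3 * s^4 - 16 * s^2 + 16"
  define p3 where "p3 = - (s^6) + 2 * s^5 + 7 * s^4 - 8 * s^3 - 16 * s^2 + 16"
  have "(U + (v + 1 + s)^2) * (2 - s)^2 * (U + (v - 1) * (v - 1 + s^2))
      - s^2 * (4 - s^2) * v * (2 * U + (v - 1) * (2 * v + 2 - s^2))
     = (2 - s)^2 * U^2 + U * (2 * (2 - s)^2 * r^2 + r * p1 + p2)
       + r^2 * ((2 - s)^2 * r^2 + r * p1 + p3)"
    unfolding r_def p1_def p2_def p3_def by algebra
  moreover have "0 \<le> p1" unfolding p1_def using s by sos
  moreover have "0 \<le> p2"
    unfolding p2_def using s power_le_one[of s 2] zero_le_power[of s 4] by linarith
  moreover have "0 \<le> p3"
  proof -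
    have "s^4 \<le> 1" "s^3 \<le> s" using s power_decreasing[of 1 3 s] by (simp_all add: power_le_one)
    hence "0 \<le> s^5 - s^4 - 8 * s^3 + 16 * s + 16" using s zero_le_power[of s 5] by linarith
    moreover have "p3 = (1 - s) * (s^5 - s^4 - 8 * s^3 + 16 * s + 16)" unfolding p3_def by algebra
    ultimately show ?thesis using s by simp
  qed
  ultimately show ?thesis using U r by (smt (verit) mult_nonneg_nonneg zero_le_power2)
qed

lemma kernel_poly_ineq_G_nonneg:
  fixes U v s :: real
  assumes U: "0 \<le> U" and v: "0 < v" and s: "0 < s" "s < 1"
    and G_nonneg: "0 \<le> 2 * U + (v - 1) * (2 * v + 2 - s^2)"
  shows "s^2 * (4 - s^2) * v * (2 * U + (v - 1) * (2 * v + 2 - s^2))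
     \<le> (U + (v + 1 + s)^2) * (2 - s)^2 * (U + (v - 1) * (v - 1 + s^2))"
proof (cases "1 \<le> v")
  case True
  from U True s show ?thesis by (rule kernel_poly_ineq_v_ge_1)
next
  case False
  define E where "E = U + (v - 1) * (v - 1 + s^2)"
  define G where "G = 2 * U + (v - 1) * (2 * v + 2 - s^2)"
  define d where "d = (U + (v + 1 + s)^2) * (2 - s)^2"
  define k where "k = s^2 * (4 - s^2) * v"
  have s2: "s^2 \<le> 1" using s by (simp add: power_le_one)
  have "2 * E - G = (1 - v) * (4 - 3 * s^2)" unfolding E_def G_def by algebra
  moreover have "0 \<le> (1 - v) * (4 - 3 * s^2)" using False s2 by simp
  ultimately have EG: "G \<le> 2 * E" by linarith
  have "(v + 1 + s)^2 - v * (2 + s)^2 = (1 - v) * ((2 + s) * s + 1 - v)" by algebra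
  moreover have "0 \<le> (1 - v) * ((2 + s) * s + 1 - v)"
  proof -
    have "0 \<le> (2 + s) * s" using s by simp
    thus ?thesis using False by (intro mult_nonneg_nonneg) auto
  qed
  ultimately have "v * (2 + s)^2 \<le> (v + 1 + s)^2" by linarith
  hence "v * (2 + s)^2 * (2 - s)^2 \<le> d" unfolding d_def using U
    by (smt (verit) mult_right_mono zero_le_power2)
  moreover have "v * (2 + s)^2 * (2 - s)^2 = v * (4 - s^2) * (4 - s^2)" by algebra
  moreover have "v * (4 - s^2) * (2 * s^2) \<le> v * (4 - s^2) * (4 - s^2)"
    using v s2 by (intro mult_left_mono) auto
  ultimately have "2 * k \<le> d" unfolding k_def by (simp add: algebra_simps)
  hence "2 * k * G \<le> d * G" using G_nonneg unfolding G_def by (intro mult_right_mono) auto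
  hence "k * G \<le> d * (G / 2)" by simp
  also have "\<dots> \<le> d * E" using EG U unfolding d_def by (intro mult_left_mono) auto
  finally show ?thesis unfolding k_def G_def d_def E_def by (simp add: mult.assoc)
qed

lemma kernel_poly_ineq_v_le_1:
  fixes U v s :: real
  assumes U: "0 \<le> U" and v: "0 < v" "v \<le> 1" and s: "0 < s" "s < 1"
  shows "2 * s^2 * (4 - s^2) * v * (2 * U + (v - 1) * (2 * v + 2 - s^2))
     \<le> (U + (v - 1) * (v - 1 + s^2))
       * ((U + (v + 1 - s)^2) * (2 + s)^2 + (U + (v + 1 + s)^2) * (2 - s)^2)"
proof -
  define r where "r = 1 - v"
  have r: "0 \<le> r" "r \<le> 1" using v r_def by auto
  define g where "g = s^2"
  have g: "0 \<le> g" "g \<le> 1" using s g_def by (auto simp: power_le_one)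
  define c where "c = (4 * g + 16) * r^2 + r * (- 6 * g^2 + 16 * g - 32) + (6 * g^2 - 32 * g + 32)"
  define q where "q = (32 - 32 * g + 14 * g^2 - 2 * g^3) - r * (32 - 16 * g + 6 * g^2) + r^2 * (8 + 2 * g)"
  have "(U + (v - 1) * (v - 1 + s^2))
         * ((U + (v + 1 - s)^2) * (2 + s)^2 + (U + (v + 1 + s)^2) * (2 - s)^2)
       - 2 * s^2 * (4 - s^2) * v * (2 * U + (v - 1) * (2 * v + 2 - s^2))
     = 2 * g * U^2 + 8 * (U - r * (1 - r))^2 + U * (c + 16 * r * (1 - r)) + r^2 * (q - 8 * (1 - r)^2)"
    unfolding r_def c_def q_def g_def by algebra
  moreover have "0 \<le> c + 16 * r * (1 - r)" unfolding c_def using r g by sos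
  moreover have "8 * (1 - r)^2 \<le> q"
  proof -
    have "q - 8 * (1 - r)^2
        = (1 - r) * (24 - 32 * g + 14 * g^2 - 2 * g^3 - 2 * g * r) + r * (2 * (1 - g) * (4 - 3 * g + g^2))"
      unfolding q_def by algebra
    moreover have "g^3 \<le> g^2" using g by (simp add: power_decreasing)
    hence "0 \<le> 24 - 32 * g + 14 * g^2 - 2 * g^3 - 2 * g * r"
      using g r mult_left_le[of r "2 * g"] by (simp add: power2_eq_square algebra_simps) sos
    moreover have "0 \<le> 2 * (1 - g) * (4 - 3 * g + g^2)" using g by sos
    ultimately show ?thesis using r by (smt (verit) mult_nonneg_nonneg)
  qed
  ultimately show ?thesis using U g by (smt (verit) mult_nonneg_nonneg zero_le_power2)
qed

lemma ct_eq: "ct s = 4 / (s * (4 - s^2))"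
  unfolding ct_def by (simp add: algebra_simps power2_eq_square power3_eq_cube)

lemma ln_quotient_le:
  fixes n d B :: real
  assumes "0 < n" "0 < d"
    and "n \<le> d \<Longrightarrow> 2 * (n - d) \<le> B * (n + d)" and "d \<le> n \<Longrightarrow> n - d \<le> B * d"
  shows "ln (n / d) \<le> B"
proof (cases "n \<le> d")
  case True
  hence "ln (n / d) \<le> 2 * (n / d - 1) / (n / d + 1)" using assms by (intro ln_le_pade) auto
  also have "\<dots> = 2 * (n - d) / (n + d)"
  proof -
    have "n / d - 1 = (n - d) / d" "n / d + 1 = (n + d) / d" using assms by (simp_all add: field_simps)
    thus ?thesis using assms by simp
  qed
  also have "\<dots> \<le> B" using assms True by (simp add: divide_le_eq add_pos_pos)
  finally show ?thesis .
next
  case False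
  have "ln (n / d) \<le> n / d - 1" using assms by (intro ln_le_minus_one) simp
  also have "\<dots> = (n - d) / d" using assms by (simp add: field_simps)
  also have "\<dots> \<le> B" using assms False by (simp add: divide_le_eq)
  finally show ?thesis .
qed

lemma ln_kernel_ineq:
  fixes U v s :: real
  assumes U: "0 \<le> U" and v: "0 < v" and s: "0 < s" "s < 1"
  shows "ln ((U + (v + 1 - s)^2) / (U + (v + 1 + s)^2)) - ct s * ((U + v^2 + 1 - s^2) / v)
     \<le> ln ((2 - s)^2 / (2 + s)^2) - ct s * (2 - s^2)"
proof -
  define n where "n = (U + (v + 1 - s)^2) * (2 + s)^2"
  define d where "d = (U + (v + 1 + s)^2) * (2 - s)^2"
  define E where "E = U + (v - 1) * (v - 1 + s^2)"
  define G where "G = 2 * U + (v - 1) * (2 * v + 2 - s^2)"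
  define k where "k = s * (4 - s^2)"
  have np: "n > 0" unfolding n_def using U v s by (simp add: add_nonneg_pos)
  have dp: "d > 0" unfolding d_def using U v s by (simp add: add_nonneg_pos)
  have s2: "s^2 < 1" using s by (simp add: power_less_one_iff)
  have kv: "k * v > 0" unfolding k_def using s s2 v by simp
  have nd: "n - d = 4 * s * G" unfolding n_def d_def G_def by algebra
  have "(n / d) * ((2 - s)^2 / (2 + s)^2)
      = ((U + (v + 1 - s)^2) * ((2 - s)^2 * (2 + s)^2)) / ((U + (v + 1 + s)^2) * ((2 - s)^2 * (2 + s)^2))"
    unfolding n_def d_def by (simp add: ac_simps)
  also have "\<dots> = (U + (v + 1 - s)^2) / (U + (v + 1 + s)^2)"
    using s by (intro nonzero_mult_divide_mult_cancel_right) simp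
  finally have ratio: "(U + (v + 1 - s)^2) / (U + (v + 1 + s)^2) = (n / d) * ((2 - s)^2 / (2 + s)^2)" ..
  have "ln ((U + (v + 1 - s)^2) / (U + (v + 1 + s)^2)) = ln (n / d) + ln ((2 - s)^2 / (2 + s)^2)"
    unfolding ratio using np dp s by (subst ln_mult) auto
  moreover have "ct s * ((U + v^2 + 1 - s^2) / v) - ct s * (2 - s^2) = 4 * E / (k * v)"
  proof -
    have "(U + v^2 + 1 - s^2) / v - (2 - s^2) = E / v"
      unfolding E_def using v by (simp add: field_simps power2_eq_square)
    thus ?thesis unfolding ct_eq k_def by (metis right_diff_distrib times_divide_times_eq mult_1)
  qed
  moreover have "ln (n / d) \<le> 4 * E / (k * v)"
  proof (rule ln_quotient_le[OF np dp])
    assume "n \<le> d"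
    hence "4 * s * G \<le> 0" using nd by linarith
    hence "G \<le> 0" using s by (simp add: mult_le_0_iff)
    hence "v \<le> 1" using U s2 unfolding G_def by (smt (verit) mult_pos_pos)
    hence "2 * s^2 * (4 - s^2) * v * G \<le> E * (n + d)"
      using kernel_poly_ineq_v_le_1[OF U v _ s] unfolding n_def d_def G_def E_def by simp
    thus "2 * (n - d) \<le> 4 * E / (k * v) * (n + d)"
      unfolding nd k_def using kv[unfolded k_def] by (simp add: field_simps power2_eq_square)
  next
    assume "d \<le> n"
    hence "0 \<le> 4 * s * G" using nd by linarith
    hence "0 \<le> G" using s by (simp add: zero_le_mult_iff)
    hence "s^2 * (4 - s^2) * v * G \<le> d * E"
      using kernel_poly_ineq_G_nonneg[OF U v s] unfolding d_def G_def E_def by simp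
    thus "n - d \<le> 4 * E / (k * v) * d"
      unfolding nd k_def using kv[unfolded k_def] by (simp add: field_simps power2_eq_square)
  qed
  ultimately show ?thesis by linarith
qed

section \<open>Real Moebius transformations and the cross ratio\<close>

definition mob :: "real \<Rightarrow> real \<Rightarrow> real \<Rightarrow> real \<Rightarrow> complex \<Rightarrow> complex" where
  "mob a b c d z = (of_real a * z + of_real b) / (of_real c * z + of_real d)"

lemma mob_den_nonzero:
  assumes "a * d - b * c = 1" "Im z \<noteq> 0"
  shows "of_real c * z + of_real d \<noteq> 0"
proof
  assume h: "of_real c * z + of_real d = 0"
  hence "Im (of_real c * z + of_real d) = 0" by simp
  hence "c = 0" using assms(2) by simp
  with h have "d = 0" by simp
  with \<open>c = 0\<close> show False using assms(1) by simp
qed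

lemma mob_diff:
  assumes "a * d - b * c = 1"
    and "of_real c * z1 + of_real d \<noteq> 0" "of_real c * z2 + of_real d \<noteq> 0"
  shows "mob a b c d z1 - mob a b c d z2
    = (z1 - z2) / ((of_real c * z1 + of_real d) * (of_real c * z2 + of_real d))"
proof -
  have det: "(of_real a * of_real d - of_real b * of_real c :: complex) = 1"
    using assms(1) by (metis of_real_1 of_real_diff of_real_mult)
  have "(of_real a * z1 + of_real b) * (of_real c * z2 + of_real d)
      - (of_real a * z2 + of_real b) * (of_real c * z1 + of_real d)
     = (of_real a * of_real d - of_real b * of_real c) * (z1 - z2)"
    by (simp add: algebra_simps)
  thus ?thesis unfolding mob_def using assms(2,3) det by (simp add: field_simps)
qed

lemma mob_cnj: "mob a b c d (cnj z) = cnj (mob a b c d z)"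
  unfolding mob_def by simp

lemma Im_mob:
  assumes "a * d - b * c = 1" "Im z \<noteq> 0"
  shows "Im (mob a b c d z) = Im z / (cmod (of_real c * z + of_real d))^2"
proof -
  have "cnj (of_real c * z + of_real d) = of_real c * cnj z + of_real d" by simp
  hence "(of_real c * z + of_real d) * (of_real c * cnj z + of_real d)
      = of_real ((cmod (of_real c * z + of_real d))^2)"
    by (metis complex_norm_square)
  moreover have "mob a b c d z - mob a b c d (cnj z)
      = (z - cnj z) / ((of_real c * z + of_real d) * (of_real c * cnj z + of_real d))"
    using assms by (intro mob_diff mob_den_nonzero) auto
  ultimately have "mob a b c d z - cnj (mob a b c d z)
      = (z - cnj z) / of_real ((cmod (of_real c * z + of_real d))^2)"
    by (simp add: mob_cnj)
  hence "Im (mob a b c d z - cnj (mob a b c d z))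
      = Im ((z - cnj z) / of_real ((cmod (of_real c * z + of_real d))^2))" by simp
  thus ?thesis by simp
qed

lemma Im_mob_pos: "a * d - b * c = 1 \<Longrightarrow> Im z > 0 \<Longrightarrow> Im (mob a b c d z) > 0"
  using Im_mob mob_den_nonzero by (simp add: divide_pos_pos)

lemma Im_mob_neg: "a * d - b * c = 1 \<Longrightarrow> Im z < 0 \<Longrightarrow> Im (mob a b c d z) < 0"
  using Im_mob mob_den_nonzero by (simp add: divide_neg_pos)

lemma mob_mob_inverse:
  assumes "a * d - b * c = 1" "Im w \<noteq> 0"
  shows "mob a b c d (mob d (- b) (- c) a w) = w"
proof -
  have "d * a - (- b) * (- c) = 1" using assms(1) by (simp add: algebra_simps)
  hence n: "of_real (- c) * w + of_real a \<noteq> 0" using assms(2) by (rule mob_den_nonzero)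
  have det: "(of_real a * of_real d - of_real b * of_real c :: complex) = 1"
    using assms(1) by (metis of_real_1 of_real_diff of_real_mult)
  have "mob a b c d (mob d (- b) (- c) a w)
     = (of_real a * (of_real d * w - of_real b) + of_real b * (- of_real c * w + of_real a))
       / (of_real c * (of_real d * w - of_real b) + of_real d * (- of_real c * w + of_real a))"
  proof -
    have sub: "(A * (N / M) + B) / (C * (N / M) + D) = (A * N + B * M) / (C * N + D * M)"
      if "M \<noteq> 0" for A B C D N M :: complex
    proof -
      have "A * (N / M) + B = (A * N + B * M) / M" "C * (N / M) + D = (C * N + D * M) / M"
        using that by (simp_all add: field_simps)
      thus ?thesis using that by simp
    qed
    show ?thesis unfolding mob_def using n by (subst sub) (simp_all add: algebra_simps)
  qed
  also have "\<dots> = (of_real a * of_real d - of_real b * of_real c) * w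
       / (of_real a * of_real d - of_real b * of_real c :: complex)"
    by (simp add: algebra_simps)
  finally show ?thesis using det by simp
qed

lemma mob_has_field_derivative:
  assumes "a * d - b * c = 1" "of_real c * z + of_real d \<noteq> 0"
  shows "(mob a b c d has_field_derivative 1 / (of_real c * z + of_real d)^2) (at z)"
proof -
  have "(of_real a * of_real d - of_real b * of_real c :: complex) = 1"
    using assms(1) by (metis of_real_1 of_real_diff of_real_mult)
  thus ?thesis unfolding mob_def[abs_def] using assms(2)
    by (auto intro!: derivative_eq_intros simp: power2_eq_square algebra_simps)
qed

definition cosh_cross_ratio :: "complex \<Rightarrow> complex \<Rightarrow> complex \<Rightarrow> complex \<Rightarrow> complex" where
  "cosh_cross_ratio z1 z2 z3 z4 = 1 - 2 * (((z1 - z3) * (z2 - z4)) / ((z1 - z2) * (z3 - z4)))"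

lemma cosh_cross_ratio_mob:
  assumes det: "a * d - b * c = 1"
    and n: "of_real c * z1 + of_real d \<noteq> 0" "of_real c * z2 + of_real d \<noteq> 0"
      "of_real c * z3 + of_real d \<noteq> 0" "of_real c * z4 + of_real d \<noteq> 0"
    and "z1 \<noteq> z2" "z3 \<noteq> z4"
  shows "cosh_cross_ratio (mob a b c d z1) (mob a b c d z2) (mob a b c d z3) (mob a b c d z4)
       = cosh_cross_ratio z1 z2 z3 z4"
proof -
  have cancel: "(A / (g1 * g3)) * (B / (g2 * g4)) / ((C / (g1 * g2)) * (D / (g3 * g4)))
      = (A * B) / (C * D)"
    if "g1 \<noteq> 0" "g2 \<noteq> 0" "g3 \<noteq> 0" "g4 \<noteq> 0" "C \<noteq> 0" "D \<noteq> 0" for A B C D g1 g2 g3 g4 :: complex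
    using that by (simp add: field_simps)
  show ?thesis
    unfolding cosh_cross_ratio_def mob_diff[OF det n(1) n(3)] mob_diff[OF det n(2) n(4)]
      mob_diff[OF det n(1) n(2)] mob_diff[OF det n(3) n(4)]
    using assms by (subst cancel) auto
qed

lemma cosh_cross_ratio_affine:
  assumes "y \<noteq> 0"
  shows "cosh_cross_ratio (x + y * z1) (x + y * z2) (x + y * z3) (x + y * z4)
       = cosh_cross_ratio z1 z2 z3 z4"
proof -
  have "(x + y * u) - (x + y * v) = y * (u - v)" for u v by (simp add: algebra_simps)
  moreover have "(y * A) * (y * B) / ((y * C) * (y * D)) = (A * B) / (C * D)" for A B C D
  proof -
    have "(y * A) * (y * B) = (y * y) * (A * B)" "(y * C) * (y * D) = (y * y) * (C * D)"
      by (simp_all add: ac_simps)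
    thus ?thesis using assms by simp
  qed
  ultimately show ?thesis unfolding cosh_cross_ratio_def by simp
qed

lemma coshdist_eq_cross_ratio:
  assumes "Im z \<noteq> 0" "snd P \<noteq> 0"
  shows "coshdist z P = cosh_cross_ratio z (cnj z) (ZZ P) (ZZt P)"
proof -
  obtain X Y where P: "P = (X, Y)" by (cases P)
  have z: "z = of_real (Re z) + \<i> * of_real (Im z)" by (simp add: complex_eq_iff)
  have "(z - ZZ P) * (cnj z - ZZt P) = (of_real (Re z) - X)^2 + (of_real (Im z) - Y)^2"
    unfolding P ZZ_def ZZt_def by (subst (1 2) z) (simp add: algebra_simps power2_eq_square)
  moreover have "(z - cnj z) * (ZZ P - ZZt P) = - 4 * of_real (Im z) * Y"
    unfolding P ZZ_def ZZt_def by (subst (1 2) z) (simp add: algebra_simps power2_eq_square)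
  ultimately have "cosh_cross_ratio z (cnj z) (ZZ P) (ZZt P)
      = 1 - 2 * (((of_real (Re z) - X)^2 + (of_real (Im z) - Y)^2) / (- 4 * of_real (Im z) * Y))"
    unfolding cosh_cross_ratio_def by simp
  also have "\<dots> = coshdist z P"
    unfolding coshdist_def P using P assms by (simp add: field_simps)
  finally show ?thesis ..
qed

lemma Re_cosh_cross_ratio_model:
  assumes "Im w > 0"
  shows "Re (cosh_cross_ratio w (cnj w) (\<i> * of_real (1 + s)) (- \<i> * of_real (1 - s)))
       = ((Re w)^2 + (Im w)^2 + (1 - s^2)) / (2 * Im w)"
proof -
  obtain u v where w: "w = Complex u v" by (cases w)
  have v: "v > 0" using assms w by simp
  define Q where "Q = (w - \<i> * of_real (1 + s)) * (cnj w - - \<i> * of_real (1 - s))"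
  have "(w - cnj w) * (\<i> * of_real (1 + s) - - \<i> * of_real (1 - s)) = of_real (- 4 * v)"
    unfolding w by (simp add: complex_eq_iff)
  hence "cosh_cross_ratio w (cnj w) (\<i> * of_real (1 + s)) (- \<i> * of_real (1 - s))
      = 1 - 2 * (Q / of_real (- 4 * v))"
    unfolding cosh_cross_ratio_def Q_def by simp
  also have "\<dots> = 1 + Q / of_real (2 * v)" using v by (simp add: field_simps)
  finally have cr: "cosh_cross_ratio w (cnj w) (\<i> * of_real (1 + s)) (- \<i> * of_real (1 - s))
      = 1 + Q / of_real (2 * v)" .
  have "Re Q = u^2 + v^2 - 2 * v + 1 - s^2"
    unfolding Q_def w by (simp add: algebra_simps power2_eq_square)
  thus ?thesis unfolding cr using v w by (simp add: field_simps power2_eq_square)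
qed

section \<open>The horocycle endpoints\<close>

text \<open>rot th is the isometry of the upper half plane fixing i with derivative -cis th there, so
  it maps the standard horocycle t \<mapsto> -t + i onto the horocycle through i with direction th,
  and hor z th t = Re z + Im z * rot th (-t + i) for real t.\<close>

definition rot :: "real \<Rightarrow> complex \<Rightarrow> complex" where
  "rot th = mob (sin (th / 2)) (- cos (th / 2)) (cos (th / 2)) (sin (th / 2))"

definition rot_inv :: "real \<Rightarrow> complex \<Rightarrow> complex" where
  "rot_inv th = mob (sin (th / 2)) (cos (th / 2)) (- cos (th / 2)) (sin (th / 2))"

lemma rot_det: "sin (th / 2) * sin (th / 2) - (- cos (th / 2)) * cos (th / 2) = (1 :: real)"
  by (metis add.commute minus_mult_left diff_minus_eq_add power2_eq_square sin_cos_squared_add3)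

lemma rot_inv_det: "sin (th / 2) * sin (th / 2) - cos (th / 2) * (- cos (th / 2)) = (1 :: real)"
  using rot_det[of th] by simp

lemma rot_rot_inv: "Im w \<noteq> 0 \<Longrightarrow> rot th (rot_inv th w) = w"
  unfolding rot_def rot_inv_def using mob_mob_inverse[OF rot_det] by simp

lemma Im_rot_inv_pos: "Im w > 0 \<Longrightarrow> Im (rot_inv th w) > 0"
  unfolding rot_inv_def by (rule Im_mob_pos[OF rot_inv_det])

lemma rot_inv_i: "rot_inv th \<i> = \<i>"
proof -
  have "of_real (- cos (th / 2)) * \<i> + of_real (sin (th / 2)) \<noteq> 0"
    using mob_den_nonzero[OF rot_inv_det, of \<i>] by simp
  moreover have "of_real (sin (th / 2)) * \<i> + of_real (cos (th / 2))
      = \<i> * (of_real (- cos (th / 2)) * \<i> + of_real (sin (th / 2)))"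
    by (simp add: algebra_simps)
  ultimately show ?thesis unfolding rot_inv_def mob_def by simp
qed

lemma cis_eq_half_angle_sq: "cis th = (of_real (cos (th / 2)) + \<i> * of_real (sin (th / 2)))^2"
proof -
  have "cis th = cis (th / 2) * cis (th / 2)" by (simp add: cis_mult)
  thus ?thesis by (simp add: complex_eq_iff power2_eq_square)
qed

lemma rot_upper_endpoint:
  assumes "0 \<le> s"
  shows "rot th (\<i> * of_real (1 + s)) = \<i> * (2 + of_real s - of_real s * cis th) / (2 + of_real s + of_real s * cis th)"
proof -
  define C S where "C = cos (th / 2)" and "S = sin (th / 2)"
  have det: "S * S - (- C) * C = 1" unfolding C_def S_def by (rule rot_det)
  have CS: "(of_real C)^2 + (of_real S)^2 = (1 :: complex)"
    unfolding C_def S_def by (metis of_real_add of_real_power of_real_1 sin_cos_squared_add2 add.commute)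
  have "- s \<le> s * cos th" using assms cos_ge_minus_one[of th] mult_left_mono[of "-1" "cos th" s] by simp
  hence "0 < Re (2 + of_real s + of_real s * cis th)" using assms by simp
  hence d1: "2 + of_real s + of_real s * cis th \<noteq> 0" by force
  have d2: "of_real C * (\<i> * of_real (1 + s)) + of_real S \<noteq> 0"
    using mob_den_nonzero[OF det, of "\<i> * of_real (1 + s)"] assms by simp
  have "(of_real S * (\<i> * of_real (1 + s)) + of_real (- C)) * (2 + of_real s + of_real s * cis th)
      = \<i> * (2 + of_real s - of_real s * cis th) * (of_real C * (\<i> * of_real (1 + s)) + of_real S)"
    unfolding cis_eq_half_angle_sq C_def[symmetric] S_def[symmetric] of_real_add of_real_minus of_real_1
    using CS complex_i_mult_minus[of 1] by algebra
  thus ?thesis unfolding rot_def mob_def C_def[symmetric] S_def[symmetric]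
    by (subst frac_eq_eq[OF d2 d1])
qed

lemma rot_lower_endpoint:
  assumes "0 \<le> s" "s < 1"
  shows "rot th (- \<i> * of_real (1 - s))
    = - \<i> * (2 - of_real s + of_real s * cnj (cis th)) / (2 - of_real s - of_real s * cnj (cis th))"
proof -
  define C S where "C = cos (th / 2)" and "S = sin (th / 2)"
  have det: "S * S - (- C) * C = 1" unfolding C_def S_def by (rule rot_det)
  have CS: "(of_real C)^2 + (of_real S)^2 = (1 :: complex)"
    unfolding C_def S_def by (metis of_real_add of_real_power of_real_1 sin_cos_squared_add2 add.commute)
  have "s * cos th \<le> s" using assms cos_le_one[of th] by (simp add: mult_left_le)
  hence "0 < Re (2 - of_real s - of_real s * cnj (cis th))" using assms by simp
  hence d1: "2 - of_real s - of_real s * cnj (cis th) \<noteq> 0" by force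
  have d2: "of_real C * (- \<i> * of_real (1 - s)) + of_real S \<noteq> 0"
    using mob_den_nonzero[OF det, of "- \<i> * of_real (1 - s)"] assms by simp
  have e: "cnj (cis th) = (of_real C - \<i> * of_real S)^2"
    unfolding C_def S_def by (subst cis_eq_half_angle_sq) simp
  have "(of_real S * (- \<i> * of_real (1 - s)) + of_real (- C)) * (2 - of_real s - of_real s * cnj (cis th))
      = - \<i> * (2 - of_real s + of_real s * cnj (cis th)) * (of_real C * (- \<i> * of_real (1 - s)) + of_real S)"
    unfolding e of_real_diff of_real_minus of_real_1 using CS complex_i_mult_minus[of 1] by algebra
  thus ?thesis unfolding rot_def mob_def C_def[symmetric] S_def[symmetric]
    by (subst frac_eq_eq[OF d2 d1])
qed

lemma hor_endpoints:
  assumes s: "0 \<le> s" "s < 1"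
  shows "ZZ (hor z th (- \<i> * of_real s)) = of_real (Re z) + of_real (Im z) * rot th (\<i> * of_real (1 + s))"
    and "ZZt (hor z th (- \<i> * of_real s)) = of_real (Re z) + of_real (Im z) * rot th (- \<i> * of_real (1 - s))"
proof -
  have cancel: "c * y * (- c * N) / (- c * D) = y * (c * N / D)" if "c \<noteq> 0" for c y N D :: complex
    using that by (cases "D = 0") (simp_all add: field_simps)
  have "- \<i> * of_real s * (1 - cis th) - 2 * \<i> = - \<i> * (2 + of_real s - of_real s * cis th)"
    "- \<i> * of_real s * (1 + cis th) - 2 * \<i> = - \<i> * (2 + of_real s + of_real s * cis th)"
    by (simp_all add: algebra_simps)
  hence w: "\<i> * of_real (Im z) * (- \<i> * of_real s * (1 - cis th) - 2 * \<i>)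
      / (- \<i> * of_real s * (1 + cis th) - 2 * \<i>) = of_real (Im z) * rot th (\<i> * of_real (1 + s))"
    using cancel[of \<i>] by (simp only: rot_upper_endpoint[OF s(1)]) simp
  have "- \<i> * of_real s * (1 - cnj (cis th)) + 2 * \<i> = - (- \<i>) * (2 - of_real s + of_real s * cnj (cis th))"
    "- \<i> * of_real s * (1 + cnj (cis th)) + 2 * \<i> = - (- \<i>) * (2 - of_real s - of_real s * cnj (cis th))"
    by (simp_all add: algebra_simps)
  hence w': "- \<i> * of_real (Im z) * (- \<i> * of_real s * (1 - cnj (cis th)) + 2 * \<i>)
      / (- \<i> * of_real s * (1 + cnj (cis th)) + 2 * \<i>) = of_real (Im z) * rot th (- \<i> * of_real (1 - s))"
    using cancel[of "- \<i>"] by (simp only: rot_lower_endpoint[OF s]) simp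
  show "ZZ (hor z th (- \<i> * of_real s)) = of_real (Re z) + of_real (Im z) * rot th (\<i> * of_real (1 + s))"
    unfolding ZZ_def hor_def Let_def using w w' by (simp add: field_simps)
  show "ZZt (hor z th (- \<i> * of_real s)) = of_real (Re z) + of_real (Im z) * rot th (- \<i> * of_real (1 - s))"
    unfolding ZZt_def hor_def Let_def using w w' by (simp add: field_simps)
qed

lemma Im_hor_endpoints:
  assumes "Im z > 0" "0 \<le> s" "s < 1"
  shows "Im (ZZ (hor z th (- \<i> * of_real s))) > 0" and "Im (ZZt (hor z th (- \<i> * of_real s))) < 0"
proof -
  have "Im (rot th (\<i> * of_real (1 + s))) > 0" "Im (rot th (- \<i> * of_real (1 - s))) < 0"
    unfolding rot_def using assms by (simp_all add: Im_mob_pos[OF rot_det] Im_mob_neg[OF rot_det])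
  thus "Im (ZZ (hor z th (- \<i> * of_real s))) > 0" "Im (ZZt (hor z th (- \<i> * of_real s))) < 0"
    unfolding hor_endpoints[OF assms(2,3)] using assms(1) by (simp_all add: mult_pos_neg)
qed

lemma G1_Im_endpoints: "P \<in> G1 \<Longrightarrow> Im (ZZ P) > 0 \<and> Im (ZZt P) < 0"
  unfolding G1_def Hpl_def using Im_hor_endpoints by fastforce

lemma hor_mem_G1: "z \<in> Hpl \<Longrightarrow> 0 \<le> s \<Longrightarrow> s < 1 \<Longrightarrow> hor z th (- \<i> * of_real s) \<in> G1"
  unfolding G1_def by force

lemma Re_snd_eq: "2 * Re (snd P) = Im (ZZ P) - Im (ZZt P)"
  unfolding ZZ_def ZZt_def by simp

section \<open>The kernel in terms of the endpoints\<close>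

definition kern :: "real \<Rightarrow> complex \<Rightarrow> complex \<Rightarrow> complex \<Rightarrow> complex" where
  "kern t z A B = (z - B) / (cnj z - A) * exp (- of_real (ct t) * cosh_cross_ratio z (cnj z) A B)"

lemma Kt_eq_kern: "Im z \<noteq> 0 \<Longrightarrow> snd P \<noteq> 0 \<Longrightarrow> Kt t z P = kern t z (ZZ P) (ZZt P)"
  unfolding Kt_def kern_def by (simp add: coshdist_eq_cross_ratio)

lemma kern_affine:
  assumes "y \<noteq> 0"
  shows "kern t (of_real x + of_real y * z) (of_real x + of_real y * A) (of_real x + of_real y * B)
       = kern t z A B"
proof -
  have "cnj (of_real x + of_real y * z) = of_real x + of_real y * cnj z" by simp
  moreover have "(of_real x + of_real y * u) - (of_real x + of_real y * v) = of_real y * (u - v)"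
    for u v :: complex by (simp add: algebra_simps)
  ultimately show ?thesis
    unfolding kern_def using assms cosh_cross_ratio_affine[of "of_real y"] by simp
qed

lemma norm_kern_mob:
  assumes det: "a * d - b * c = 1" and "Im z \<noteq> 0" "Im A \<noteq> 0" "Im B \<noteq> 0" "A \<noteq> B"
  shows "cmod (kern t (mob a b c d z) (mob a b c d A) (mob a b c d B))
       = cmod (of_real c * A + of_real d) / cmod (of_real c * B + of_real d) * cmod (kern t z A B)"
proof -
  define \<gamma> where "\<gamma> u = of_real c * u + of_real d" for u :: complex
  have \<gamma>: "\<gamma> z \<noteq> 0" "\<gamma> (cnj z) \<noteq> 0" "\<gamma> A \<noteq> 0" "\<gamma> B \<noteq> 0"
    unfolding \<gamma>_def using assms by (simp_all add: mob_den_nonzero[OF det])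
  have \<gamma>_cnj: "cmod (\<gamma> (cnj z)) = cmod (\<gamma> z)"
    unfolding \<gamma>_def by (metis complex_cnj_complex_of_real complex_cnj_mult complex_cnj_add complex_mod_cnj)
  have diff: "mob a b c d z - mob a b c d B = (z - B) / (\<gamma> z * \<gamma> B)"
    "mob a b c d (cnj z) - mob a b c d A = (cnj z - A) / (\<gamma> (cnj z) * \<gamma> A)"
    using \<gamma> unfolding \<gamma>_def by (simp_all add: mob_diff[OF det])
  have cr: "cosh_cross_ratio (mob a b c d z) (mob a b c d (cnj z)) (mob a b c d A) (mob a b c d B)
      = cosh_cross_ratio z (cnj z) A B"
    using assms \<gamma> unfolding \<gamma>_def by (intro cosh_cross_ratio_mob) (auto simp: complex_eq_iff)
  have eq: "kern t (mob a b c d z) (mob a b c d A) (mob a b c d B)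
      = ((z - B) / (\<gamma> z * \<gamma> B)) / ((cnj z - A) / (\<gamma> (cnj z) * \<gamma> A))
        * exp (- of_real (ct t) * cosh_cross_ratio z (cnj z) A B)"
    unfolding kern_def mob_cnj[symmetric] diff cr ..
  have real_id: "(n1 / (gz * gB)) / (n2 / (gz * gA)) * e = gA / gB * (n1 / n2 * e)"
    if "gz \<noteq> 0" "gA \<noteq> 0" "gB \<noteq> 0" for n1 n2 gz gA gB e :: real
    using that by (cases "n2 = 0") (simp_all add: field_simps)
  show ?thesis unfolding eq unfolding kern_def norm_mult norm_divide \<gamma>_cnj \<gamma>_def[symmetric]
    by (rule real_id) (use \<gamma> in simp_all)
qed

text \<open>model_log s w = ln |K_s(w, P)| for the reference point P = h_{-is}(i, \<pi>), whose endpoints are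
  Z P = i(1 + s) and Z~ P = -i(1 - s) (lemma norm_kern_model).\<close>

definition model_log :: "real \<Rightarrow> complex \<Rightarrow> real" where
  "model_log s w = ln ((Re w)^2 + (Im w + (1 - s))^2) / 2 - ln ((Re w)^2 + (Im w + (1 + s))^2) / 2
     - ct s * (((Re w)^2 + (Im w)^2 + (1 - s^2)) / (2 * Im w))"

lemma norm_kern_model:
  assumes s: "0 < s" "s < 1" and w: "Im w > 0"
  shows "cmod (kern s w (\<i> * of_real (1 + s)) (- \<i> * of_real (1 - s))) = exp (model_log s w)"
proof -
  define a b where "a = (Re w)^2 + (Im w + (1 - s))^2" and "b = (Re w)^2 + (Im w + (1 + s))^2"
  define E where "E = ct s * (((Re w)^2 + (Im w)^2 + (1 - s^2)) / (2 * Im w))"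
  have ab: "a > 0" "b > 0" unfolding a_def b_def using s w by (simp_all add: add_nonneg_pos)
  have "cmod (w - - \<i> * of_real (1 - s)) = sqrt a" "cmod (cnj w - \<i> * of_real (1 + s)) = sqrt b"
    unfolding a_def b_def by (simp_all add: cmod_def power2_eq_square algebra_simps)
  hence "cmod (kern s w (\<i> * of_real (1 + s)) (- \<i> * of_real (1 - s))) = sqrt a / sqrt b * exp (- E)"
    unfolding kern_def E_def using Re_cosh_cross_ratio_model[OF w, of s] by (simp add: norm_mult norm_divide)
  also have "sqrt a / sqrt b = exp (ln a / 2 - ln b / 2)"
    using ab by (simp add: exp_diff ln_sqrt[symmetric])
  also have "exp (ln a / 2 - ln b / 2) * exp (- E) = exp (ln a / 2 - ln b / 2 - E)"
    by (metis exp_add diff_conv_add_uminus)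
  also have "ln a / 2 - ln b / 2 - E = model_log s w" unfolding model_log_def a_def b_def E_def ..
  finally show ?thesis .
qed

lemma model_log_le_i:
  assumes s: "0 < s" "s < 1" and w: "Im w > 0"
  shows "model_log s w \<le> model_log s \<i>"
proof -
  have pos: "(Re w)^2 + (Im w + c)^2 > 0" if "c > 0" for c
    using w that by (simp add: add_nonneg_pos)
  have "2 * model_log s w = ln (((Re w)^2 + (Im w + 1 - s)^2) / ((Re w)^2 + (Im w + 1 + s)^2))
      - ct s * (((Re w)^2 + (Im w)^2 + 1 - s^2) / Im w)"
    unfolding model_log_def using pos[of "1 - s"] pos[of "1 + s"] s w
    by (simp add: ln_div field_simps)
  also have "\<dots> \<le> ln ((2 - s)^2 / (2 + s)^2) - ct s * (2 - s^2)"
    using ln_kernel_ineq[of "(Re w)^2" "Im w" s] s w by (simp add: add_ac)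
  also have "\<dots> = 2 * model_log s \<i>"
    unfolding model_log_def using s by (simp add: ln_div field_simps)
  finally show ?thesis by simp
qed

definition rel_pos :: "complex \<Rightarrow> real \<times> real \<Rightarrow> complex" where
  "rel_pos z q = (z - of_real (fst q)) / of_real (snd q)"

lemma Im_rel_pos_pos: "Im z > 0 \<Longrightarrow> snd q > 0 \<Longrightarrow> Im (rel_pos z q) > 0"
  unfolding rel_pos_def by simp

lemma norm_Kt_hor:
  assumes s: "0 < s" "s < 1"
  obtains C where "C > 0" and "\<And>z z'. Im z > 0 \<Longrightarrow> Im z' > 0 \<Longrightarrow>
    cmod (Kt s z (hor z' th (- \<i> * of_real s)))
      = C * exp (model_log s (rot_inv th (rel_pos z (Re z', Im z'))))"
proof
  define A B where "A = \<i> * of_real (1 + s)" and "B = - \<i> * of_real (1 - s)"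
  define \<gamma> where "\<gamma> u = of_real (cos (th / 2)) * u + of_real (sin (th / 2))" for u :: complex
  have AB: "Im A \<noteq> 0" "Im B \<noteq> 0" "A \<noteq> B" unfolding A_def B_def using s by (auto simp: complex_eq_iff)
  hence \<gamma>: "\<gamma> A \<noteq> 0" "\<gamma> B \<noteq> 0" unfolding \<gamma>_def by (simp_all add: mob_den_nonzero[OF rot_det])
  thus "cmod (\<gamma> A) / cmod (\<gamma> B) > 0" by simp
  fix z z' :: complex
  assume z: "Im z > 0" and z': "Im z' > 0"
  define m where "m = rel_pos z (Re z', Im z')"
  define P where "P = hor z' th (- \<i> * of_real s)"
  have m: "Im m > 0" "z = of_real (Re z') + of_real (Im z') * m"
    unfolding m_def rel_pos_def using z z' by simp_all
  have P: "Im (ZZ P) > 0" "Im (ZZt P) < 0" unfolding P_def using Im_hor_endpoints[OF z'] s by auto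
  have "Kt s z P = kern s z (ZZ P) (ZZt P)"
    using z P Re_snd_eq[of P] by (intro Kt_eq_kern) auto
  also have "\<dots> = kern s m (rot th A) (rot th B)"
    unfolding P_def hor_endpoints[OF less_imp_le[OF s(1)] s(2)] A_def B_def
    using m(2) z' by (simp add: kern_affine)
  also have "\<dots> = kern s (rot th (rot_inv th m)) (rot th A) (rot th B)"
    using m by (simp add: rot_rot_inv)
  finally show "cmod (Kt s z P) = cmod (\<gamma> A) / cmod (\<gamma> B) * exp (model_log s (rot_inv th m))"
    unfolding rot_def \<gamma>_def using AB Im_rot_inv_pos[OF m(1), of th]
      norm_kern_model[OF s Im_rot_inv_pos[OF m(1)]]
    by (simp add: norm_kern_mob[OF rot_det] A_def B_def)
qed

lemma norm_Kt_le_hor: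
  assumes t: "0 < t" "t < 1" and z: "z \<in> Hpl" and P: "P \<in> Sigma_ht t th"
  shows "cmod (Kt t z P) \<le> cmod (Kt t z (hor z th (- \<i> * of_real t)))"
proof -
  obtain C where "C > 0" and norm_Kt: "\<And>z z'. Im z > 0 \<Longrightarrow> Im z' > 0 \<Longrightarrow>
      cmod (Kt t z (hor z' th (- \<i> * of_real t))) = C * exp (model_log t (rot_inv th (rel_pos z (Re z', Im z'))))"
    using norm_Kt_hor[OF t, where th = th] by blast
  obtain z' where P: "P = hor z' th (- \<i> * of_real t)" and z': "Im z' > 0"
    using P unfolding Sigma_ht_def Hpl_def by blast
  have z: "Im z > 0" using z unfolding Hpl_def by simp
  hence rel_pos_i: "rel_pos z (Re z, Im z) = \<i>" unfolding rel_pos_def by (simp add: complex_eq_iff)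
  have "cmod (Kt t z P) = C * exp (model_log t (rot_inv th (rel_pos z (Re z', Im z'))))"
    unfolding P using norm_Kt z z' by blast
  also have "\<dots> \<le> C * exp (model_log t \<i>)"
    using model_log_le_i[OF t Im_rot_inv_pos[OF Im_rel_pos_pos]] z z' \<open>C > 0\<close> by simp
  also have "\<dots> = cmod (Kt t z (hor z th (- \<i> * of_real t)))"
    using norm_Kt[OF z z] by (simp add: rel_pos_i rot_inv_i)
  finally show ?thesis .
qed

section \<open>The logarithm of the kernel\<close>

text \<open>On Hpl \<times> G1 the point z - Z~ P lies in the upper and conj z - Z P in the lower half plane,
  away from the branch cut of Ln.\<close>

definition log_Kt :: "real \<Rightarrow> complex \<times> cpt \<Rightarrow> complex" where
  "log_Kt t p = Ln (fst p - ZZt (snd p)) - Ln (cnj (fst p) - ZZ (snd p))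
     - of_real (ct t) * coshdist (fst p) (snd p)"

lemma continuous_on_log_Kt: "continuous_on (Hpl \<times> G1) (log_Kt t)"
proof -
  have side: "fst p - ZZt (snd p) \<notin> \<real>\<^sub>\<le>\<^sub>0" "cnj (fst p) - ZZ (snd p) \<notin> \<real>\<^sub>\<le>\<^sub>0"
    "2 * of_real (Im (fst p)) * snd (snd p) \<noteq> 0" if "p \<in> Hpl \<times> G1" for p
  proof -
    have "Im (fst p) > 0" "Im (ZZ (snd p)) > 0" "Im (ZZt (snd p)) < 0"
      using that G1_Im_endpoints unfolding Hpl_def by auto
    moreover from this have "Re (snd (snd p)) > 0" using Re_snd_eq[of "snd p"] by linarith
    ultimately show "fst p - ZZt (snd p) \<notin> \<real>\<^sub>\<le>\<^sub>0" "cnj (fst p) - ZZ (snd p) \<notin> \<real>\<^sub>\<le>\<^sub>0"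
      "2 * of_real (Im (fst p)) * snd (snd p) \<noteq> 0" by (auto simp: complex_nonpos_Reals_iff)
  qed
  have "continuous_on (Hpl \<times> G1) (\<lambda>p. ZZ (snd p))" "continuous_on (Hpl \<times> G1) (\<lambda>p. ZZt (snd p))"
    unfolding ZZ_def ZZt_def by (intro continuous_intros)+
  with side show ?thesis unfolding log_Kt_def coshdist_def
    by (intro continuous_intros) auto
qed

lemma exp_log_Kt:
  assumes "z \<in> Hpl" "P \<in> G1"
  shows "exp (log_Kt t (z, P)) = Kt t z P"
proof -
  have "Im z > 0" "Im (ZZ P) > 0" "Im (ZZt P) < 0"
    using assms G1_Im_endpoints unfolding Hpl_def by auto
  hence "z - ZZt P \<noteq> 0" "cnj z - ZZ P \<noteq> 0" by (auto simp: complex_eq_iff)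
  hence "exp (log_Kt t (z, P)) = (z - ZZt P) / (cnj z - ZZ P) / exp (of_real (ct t) * coshdist z P)"
    unfolding log_Kt_def by (simp add: exp_diff)
  thus ?thesis unfolding Kt_def by (simp add: exp_minus divide_inverse)
qed

lemma Re_log_Kt: "z \<in> Hpl \<Longrightarrow> P \<in> G1 \<Longrightarrow> Re (log_Kt t (z, P)) = ln (cmod (Kt t z P))"
  by (metis exp_log_Kt ln_exp norm_exp_eq_Re)

section \<open>Non-degenerate critical points under conformal changes of variables\<close>

lemma nondeg_hessian_atI:
  fixes g Fx Fy :: "real \<times> real \<Rightarrow> real"
  assumes first: "\<forall>\<^sub>F q in nhds p. (g has_derivative (\<lambda>h. Fx q * fst h + Fy q * snd h)) (at q)"
    and Fx: "(Fx has_derivative Fx') (at p)" and Fy: "(Fy has_derivative Fy') (at p)"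
    and det: "Fx' (1, 0) * Fy' (0, 1) - Fy' (1, 0) * Fx' (0, 1) \<noteq> 0"
  shows "nondeg_hessian_at g p"
proof -
  define e1 e2 :: "(real \<times> real) \<Rightarrow>\<^sub>L real" where "e1 = Blinfun fst" and "e2 = Blinfun snd"
  have e: "blinfun_apply e1 = fst" "blinfun_apply e2 = snd"
    unfolding e1_def e2_def
    by (simp_all add: bounded_linear_Blinfun_apply bounded_linear_fst bounded_linear_snd)
  define D where "D q = Fx q *\<^sub>R e1 + Fy q *\<^sub>R e2" for q
  define H where "H h = Fx' h *\<^sub>R e1 + Fy' h *\<^sub>R e2" for h
  have "blinfun_apply (D q) = (\<lambda>h. Fx q * fst h + Fy q * snd h)" for q
    unfolding D_def by (simp add: fun_eq_iff e blinfun.add_left blinfun.scaleR_left)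
  moreover have "(D has_derivative H) (at p)"
    unfolding D_def[abs_def] H_def[abs_def] using Fx Fy by (auto intro!: derivative_eq_intros)
  moreover have "blinfun_apply (H h) k = Fx' h * fst k + Fy' h * snd k" for h k
    unfolding H_def by (simp add: e blinfun.add_left blinfun.scaleR_left)
  ultimately show ?thesis unfolding nondeg_hessian_at_def using first det by (intro exI[of _ D] exI[of _ H]) simp
qed

text \<open>If L has a critical point at W p with diagonal non-degenerate Hessian diag(a, b) and the
  differential of W at p is multiplication by \<kappa> p \<noteq> 0, then the Hessian of L \<circ> W at p is
  |\<kappa> p|^2 R^T diag(a, b) R for a rotation R, with determinant a b |\<kappa> p|^4.\<close>

lemma nondeg_hessian_at_comp_conformal:
  fixes g :: "real \<times> real \<Rightarrow> real" and L Lu Lv :: "complex \<Rightarrow> real"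
    and W \<kappa> \<mu> :: "real \<times> real \<Rightarrow> complex"
  assumes S: "open S" "p \<in> S"
    and g: "\<And>q. q \<in> S \<Longrightarrow> g q = L (W q)"
    and L: "\<And>q. q \<in> S \<Longrightarrow> (L has_derivative (\<lambda>k. Lu (W q) * Re k + Lv (W q) * Im k)) (at (W q))"
    and W: "\<And>q. q \<in> S \<Longrightarrow>
      (W has_derivative (\<lambda>h. \<kappa> q * (of_real (fst h) + \<mu> q * of_real (snd h)))) (at q)"
    and \<kappa>: "(\<kappa> has_derivative K) (at p)" and \<mu>: "(\<mu> has_derivative M) (at p)"
    and Lu: "(Lu has_derivative (\<lambda>k. a * Re k)) (at (W p))"
    and Lv: "(Lv has_derivative (\<lambda>k. b * Im k)) (at (W p))"
    and crit: "Lu (W p) = 0" "Lv (W p) = 0"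
    and nondeg: "\<mu> p = \<i>" "\<kappa> p \<noteq> 0" "a \<noteq> 0" "b \<noteq> 0"
  shows "nondeg_hessian_at g p"
proof -
  define Fx where "Fx q = Lu (W q) * Re (\<kappa> q) + Lv (W q) * Im (\<kappa> q)" for q
  define Fy where "Fy q = Lu (W q) * Re (\<kappa> q * \<mu> q) + Lv (W q) * Im (\<kappa> q * \<mu> q)" for q
  have "(g has_derivative (\<lambda>h. Fx q * fst h + Fy q * snd h)) (at q)" if q: "q \<in> S" for q
  proof -
    have "((\<lambda>q. L (W q)) has_derivative (\<lambda>h. Lu (W q) * Re (\<kappa> q * (of_real (fst h) + \<mu> q * of_real (snd h)))
        + Lv (W q) * Im (\<kappa> q * (of_real (fst h) + \<mu> q * of_real (snd h))))) (at q)"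
      by (rule has_derivative_compose[OF W[OF q] L[OF q]])
    hence "((\<lambda>q. L (W q)) has_derivative (\<lambda>h. Fx q * fst h + Fy q * snd h)) (at q)"
      by (rule has_derivative_eq_rhs) (simp add: fun_eq_iff Fx_def Fy_def algebra_simps)
    thus ?thesis using has_derivative_transform_within_open[OF _ S(1) q, of "\<lambda>q. L (W q)"] g by simp
  qed
  hence first: "\<forall>\<^sub>F q in nhds p. (g has_derivative (\<lambda>h. Fx q * fst h + Fy q * snd h)) (at q)"
    by (intro eventually_mono[OF eventually_nhds_in_open[OF S]])
  define k where "k = \<kappa> p"
  define Wp where "Wp h = k * (of_real (fst h) + \<i> * of_real (snd h))" for h :: "real \<times> real"
  have Wp: "(W has_derivative Wp) (at p)" using W[OF S(2)] unfolding Wp_def k_def nondeg(1) .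
  define Fx' where "Fx' h = a * Re (Wp h) * Re k + b * Im (Wp h) * Im k" for h
  define Fy' where "Fy' h = a * Re (Wp h) * Re (k * \<i>) + b * Im (Wp h) * Im (k * \<i>)" for h
  have "(Fx has_derivative (\<lambda>h. (Lu (W p) * Re (K h) + a * Re (Wp h) * Re (\<kappa> p))
      + (Lv (W p) * Im (K h) + b * Im (Wp h) * Im (\<kappa> p)))) (at p)"
    unfolding Fx_def by (intro has_derivative_add has_derivative_mult has_derivative_Re has_derivative_Im
        has_derivative_compose[OF Wp Lu] has_derivative_compose[OF Wp Lv] \<kappa>)
  hence Fx': "(Fx has_derivative Fx') (at p)" unfolding crit Fx'_def k_def by simp
  have "(Fy has_derivative (\<lambda>h. (Lu (W p) * Re (\<kappa> p * M h + K h * \<mu> p) + a * Re (Wp h) * Re (\<kappa> p * \<mu> p))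
      + (Lv (W p) * Im (\<kappa> p * M h + K h * \<mu> p) + b * Im (Wp h) * Im (\<kappa> p * \<mu> p)))) (at p)"
    unfolding Fy_def by (intro has_derivative_add has_derivative_mult has_derivative_Re has_derivative_Im
        has_derivative_compose[OF Wp Lu] has_derivative_compose[OF Wp Lv] \<kappa> \<mu>)
  hence Fy': "(Fy has_derivative Fy') (at p)" unfolding crit Fy'_def k_def nondeg(1) by simp
  have "Fx' (1, 0) * Fy' (0, 1) - Fy' (1, 0) * Fx' (0, 1) = a * b * ((Re k)^2 + (Im k)^2)^2"
    unfolding Fx'_def Fy'_def Wp_def by (simp add: algebra_simps power2_eq_square)
  moreover have "(Re k)^2 + (Im k)^2 \<noteq> 0"
    using nondeg(2) unfolding k_def by (simp add: complex_eq_iff add_nonneg_eq_0_iff)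
  ultimately show ?thesis using nondeg by (intro nondeg_hessian_atI[OF first Fx' Fy']) simp
qed

section \<open>The Hessian of the logarithm\<close>

definition model_log_du :: "real \<Rightarrow> complex \<Rightarrow> real" where
  "model_log_du s w = Re w / ((Re w)^2 + (Im w + (1 - s))^2) - Re w / ((Re w)^2 + (Im w + (1 + s))^2)
     - ct s * (Re w / Im w)"

definition model_log_dv :: "real \<Rightarrow> complex \<Rightarrow> real" where
  "model_log_dv s w = (Im w + (1 - s)) / ((Re w)^2 + (Im w + (1 - s))^2)
     - (Im w + (1 + s)) / ((Re w)^2 + (Im w + (1 + s))^2)
     - ct s * (((Im w)^2 - (Re w)^2 - (1 - s^2)) / (2 * (Im w)^2))"

lemma has_derivative_ln_norm_sq_shift:
  assumes "(Re w)^2 + (Im w + c)^2 > 0"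
  shows "((\<lambda>w. ln ((Re w)^2 + (Im w + c)^2)) has_derivative
    (\<lambda>k. 2 * (Re w / ((Re w)^2 + (Im w + c)^2) * Re k + (Im w + c) / ((Re w)^2 + (Im w + c)^2) * Im k))) (at w)"
proof -
  have "((\<lambda>w. (Re w)^2 + (Im w + c)^2) has_derivative (\<lambda>k. 2 * Re w * Re k + 2 * (Im w + c) * Im k)) (at w)"
    by (auto intro!: derivative_eq_intros simp: algebra_simps)
  from has_derivative_ln[OF assms this] show ?thesis
    by (simp add: divide_inverse algebra_simps)
qed

lemma has_derivative_model_cosh:
  assumes "Im w \<noteq> 0"
  shows "((\<lambda>w. ((Re w)^2 + (Im w)^2 + e) / (2 * Im w)) has_derivative
    (\<lambda>k. Re w / Im w * Re k + ((Im w)^2 - (Re w)^2 - e) / (2 * (Im w)^2) * Im k)) (at w)"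
proof -
  have "((\<lambda>w. ((Re w)^2 + (Im w)^2 + e) / (2 * Im w)) has_derivative (\<lambda>k.
      ((2 * Re w * Re k + 2 * Im w * Im k) * (2 * Im w) - ((Re w)^2 + (Im w)^2 + e) * (2 * Im k)) / (2 * Im w)^2))
      (at w)"
    using assms by (auto intro!: derivative_eq_intros simp: power2_eq_square field_simps)
  moreover have "((2 * Re w * Re k + 2 * Im w * Im k) * (2 * Im w) - ((Re w)^2 + (Im w)^2 + e) * (2 * Im k)) / (2 * Im w)^2
      = Re w / Im w * Re k + ((Im w)^2 - (Re w)^2 - e) / (2 * (Im w)^2) * Im k" for k
    using assms by (simp add: field_simps power2_eq_square)
  ultimately show ?thesis by simp
qed

lemma model_log_has_derivative:
  assumes s: "0 < s" "s < 1" and w: "Im w > 0"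
  shows "(model_log s has_derivative (\<lambda>k. model_log_du s w * Re k + model_log_dv s w * Im k)) (at w)"
proof -
  have "(Re w)^2 + (Im w + (1 - s))^2 > 0" "(Re w)^2 + (Im w + (1 + s))^2 > 0"
    using s w by (simp_all add: add_nonneg_pos)
  moreover have half: "((\<lambda>w. f w / 2) has_derivative g) (at w)"
    if "(f has_derivative (\<lambda>k. 2 * g k)) (at w)" for f g :: "complex \<Rightarrow> real"
    using bounded_linear.has_derivative[OF bounded_linear_divide[of 2] that] by simp
  ultimately have "(model_log s has_derivative (\<lambda>k.
      (Re w / ((Re w)^2 + (Im w + (1 - s))^2) * Re k + (Im w + (1 - s)) / ((Re w)^2 + (Im w + (1 - s))^2) * Im k)
      - (Re w / ((Re w)^2 + (Im w + (1 + s))^2) * Re k + (Im w + (1 + s)) / ((Re w)^2 + (Im w + (1 + s))^2) * Im k)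
      - ct s * (Re w / Im w * Re k + ((Im w)^2 - (Re w)^2 - (1 - s^2)) / (2 * (Im w)^2) * Im k))) (at w)"
    unfolding model_log_def using w
    by (intro has_derivative_diff has_derivative_mult_right has_derivative_model_cosh
        half[OF has_derivative_ln_norm_sq_shift]) auto
  thus ?thesis
    by (rule has_derivative_eq_rhs) (simp add: fun_eq_iff model_log_du_def model_log_dv_def algebra_simps)
qed

lemma model_log_du_i: "model_log_du s \<i> = 0"
  unfolding model_log_du_def by simp

lemma model_log_dv_i:
  assumes "0 < s" "s < 1"
  shows "model_log_dv s \<i> = 0"
proof -
  have "s * s < 1 * 1" using assms by (intro mult_strict_mono) auto
  hence "2 - s \<noteq> 0" "2 + s \<noteq> 0" "s * s < 4" using assms by auto
  hence "model_log_dv s \<i> = 1 / (2 - s) - 1 / (2 + s) - ct s * (s^2 / 2)"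
    unfolding model_log_dv_def by (simp add: power2_eq_square)
  also have "\<dots> = 0" unfolding ct_eq using assms \<open>s * s < 4\<close> by (simp add: field_simps power2_eq_square)
  finally show ?thesis .
qed

lemma model_log_du_has_derivative_i:
  assumes s: "0 < s" "s < 1"
  obtains a where "a < 0" "(model_log_du s has_derivative (\<lambda>k. a * Re k)) (at \<i>)"
proof
  have s2: "s^2 < 1" using s by (simp add: power_less_one_iff)
  have lt: "8 * s / (4 - s^2)^2 < 4 / (s * (4 - s^2))"
  proof -
    have "8 * s * (s * (4 - s^2)) = 32 * s^2 - 8 * (s^2)^2" "4 * (4 - s^2)^2 = 64 - 32 * s^2 + 4 * (s^2)^2"
      by algebra+
    hence "8 * s * (s * (4 - s^2)) < 4 * (4 - s^2)^2" using s2 zero_le_power2[of "s^2"] by linarith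
    moreover have "0 < 4 - s^2" using s2 by simp
    ultimately show ?thesis using s by (simp add: field_simps)
  qed
  have "1 / (2 - s)^2 - 1 / (2 + s)^2 = (1 * (2 + s)^2 - 1 * (2 - s)^2) / ((2 - s)^2 * (2 + s)^2)"
    using s by (intro diff_frac_eq) auto
  also have "1 * (2 + s)^2 - 1 * (2 - s)^2 = 8 * s" by algebra
  also have "(2 - s)^2 * (2 + s)^2 = (4 - s^2)^2" by algebra
  also note lt
  finally show "1 / (2 - s)^2 - 1 / (2 + s)^2 - ct s < 0" unfolding ct_eq by simp
  have hh: "X \<noteq> 0 \<Longrightarrow> c * X^2 / X^4 = c / X^2" "X \<noteq> 0 \<Longrightarrow> (c * X^2 - X * (2 * c * X)) / X^4 = - c / X^2"
    for c X :: real by (simp_all add: power4_eq_xxxx power2_eq_square field_simps)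
  have s0: "2 - s \<noteq> 0" "2 + s \<noteq> 0" using s by auto
  show "(model_log_du s has_derivative (\<lambda>k. (1 / (2 - s)^2 - 1 / (2 + s)^2 - ct s) * Re k)) (at \<i>)"
    unfolding model_log_du_def using s0
    apply (auto intro!: derivative_eq_intros)
    by (rule ext) (simp only: hh s0, simp add: algebra_simps)
qed

lemma model_log_dv_has_derivative_i:
  assumes s: "0 < s" "s < 1"
  obtains b where "b < 0" "(model_log_dv s has_derivative (\<lambda>k. b * Im k)) (at \<i>)"
proof
  have "(2 - s)^2 < (2 + s)^2" using s by (simp add: power2_eq_square algebra_simps)
  hence "1 / (2 + s)^2 < 1 / (2 - s)^2" using s by (simp add: field_simps)
  moreover have "0 < ct s * (1 - s^2)"
  proof -
    have "s^2 < 1" using s by (simp add: power_less_one_iff)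
    hence "0 < ct s" "0 < 1 - s^2" unfolding ct_eq using s by simp_all
    thus ?thesis by simp
  qed
  ultimately show "1 / (2 + s)^2 - 1 / (2 - s)^2 - ct s * (1 - s^2) < 0" by simp
  have hh: "X \<noteq> 0 \<Longrightarrow> c * X^2 / X^4 = c / X^2" "X \<noteq> 0 \<Longrightarrow> (c * X^2 - X * (2 * c * X)) / X^4 = - c / X^2"
    for c X :: real by (simp_all add: power4_eq_xxxx power2_eq_square field_simps)
  have s0: "2 - s \<noteq> 0" "2 + s \<noteq> 0" using s by auto
  show "(model_log_dv s has_derivative (\<lambda>k. (1 / (2 + s)^2 - 1 / (2 - s)^2 - ct s * (1 - s^2)) * Im k)) (at \<i>)"
    unfolding model_log_dv_def using s0
    apply (auto intro!: derivative_eq_intros)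
    by (rule ext) (simp only: hh s0, simp add: algebra_simps diff_divide_distrib)
qed

lemma has_derivative_rel_pos:
  assumes "snd q \<noteq> 0"
  shows "(rel_pos z has_derivative (\<lambda>h. - (of_real (fst h) + rel_pos z q * of_real (snd h)) / of_real (snd q))) (at q)"
proof -
  have "(rel_pos z has_derivative (\<lambda>h. (- of_real (fst h) * of_real (snd q) - (z - of_real (fst q)) * of_real (snd h))
      / (of_real (snd q))^2)) (at q)"
    unfolding rel_pos_def[abs_def] using assms
    by (auto intro!: derivative_eq_intros simp: power2_eq_square field_simps)
  moreover have "(\<lambda>h. (- of_real (fst h) * of_real (snd q) - (z - of_real (fst q)) * of_real (snd h)) / (of_real (snd q))^2)
     = (\<lambda>h. - (of_real (fst h) + rel_pos z q * of_real (snd h)) / of_real (snd q))"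
    unfolding rel_pos_def using assms by (intro ext) (simp add: field_simps power2_eq_square)
  ultimately show ?thesis by simp
qed

lemma has_derivative_rot_inv_rel_pos:
  fixes th :: real
  assumes "snd q \<noteq> 0" "Im (rel_pos z q) \<noteq> 0"
  defines "\<gamma> \<equiv> of_real (- cos (th / 2)) * rel_pos z q + of_real (sin (th / 2))"
  shows "((\<lambda>q. rot_inv th (rel_pos z q)) has_derivative
    (\<lambda>h. - 1 / \<gamma>^2 / of_real (snd q) * (of_real (fst h) + rel_pos z q * of_real (snd h)))) (at q)"
proof -
  have "\<gamma> \<noteq> 0" unfolding \<gamma>_def using assms(2) by (rule mob_den_nonzero[OF rot_inv_det])
  have "(rot_inv th has_field_derivative 1 / \<gamma>^2) (at (rel_pos z q))"
    unfolding rot_inv_def \<gamma>_def using assms(2)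
    by (intro mob_has_field_derivative rot_inv_det mob_den_nonzero[OF rot_inv_det])
  from has_derivative_compose[OF has_derivative_rel_pos[OF assms(1)]
      has_field_derivative_imp_has_derivative[OF this]]
  show ?thesis
    by (rule has_derivative_eq_rhs) (use \<open>\<gamma> \<noteq> 0\<close> assms(1) in \<open>simp add: fun_eq_iff field_simps\<close>)
qed

lemma nondeg_hessian_log_Kt:
  assumes t: "0 < t" "t < 1" and z0: "Im z0 > 0"
  shows "nondeg_hessian_at (\<lambda>(x, y). Re (log_Kt t (z0, hor (Complex x y) th (- \<i> * of_real t))))
    (Re z0, Im z0)"
proof -
  obtain C where C: "C > 0" and norm_Kt: "\<And>z z'. Im z > 0 \<Longrightarrow> Im z' > 0 \<Longrightarrow>
      cmod (Kt t z (hor z' th (- \<i> * of_real t))) = C * exp (model_log t (rot_inv th (rel_pos z (Re z', Im z'))))"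
    using norm_Kt_hor[OF t, where th = th] by blast
  obtain a where "a < 0" and a: "(model_log_du t has_derivative (\<lambda>k. a * Re k)) (at \<i>)"
    using model_log_du_has_derivative_i[OF t] by blast
  obtain b where "b < 0" and b: "(model_log_dv t has_derivative (\<lambda>k. b * Im k)) (at \<i>)"
    using model_log_dv_has_derivative_i[OF t] by blast
  define S where "S = {q :: real \<times> real. snd q > 0}"
  define \<gamma> where "\<gamma> w = of_real (- cos (th / 2)) * w + of_real (sin (th / 2))" for w :: complex
  define p where "p = (Re z0, Im z0)"
  have rel_pos: "Im (rel_pos z0 q) > 0" if "q \<in> S" for q
    using that z0 unfolding S_def by (simp add: Im_rel_pos_pos)
  have "p \<in> S" unfolding p_def S_def using z0 by simp
  hence snd_p: "snd p \<noteq> 0" unfolding S_def by simp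
  have "Im (rel_pos z0 p) \<noteq> 0" using rel_pos[OF \<open>p \<in> S\<close>] by simp
  hence \<gamma>_p: "\<gamma> (rel_pos z0 p) \<noteq> 0" unfolding \<gamma>_def by (rule mob_den_nonzero[OF rot_inv_det])
  have "open S" unfolding S_def by (intro open_Collect_less continuous_intros)
  have g_eq: "(\<lambda>(x, y). Re (log_Kt t (z0, hor (Complex x y) th (- \<i> * of_real t)))) q
      = ln C + model_log t (rot_inv th (rel_pos z0 q))" if "q \<in> S" for q
  proof -
    obtain x y where q: "q = (x, y)" by (cases q)
    have "Complex x y \<in> Hpl" "z0 \<in> Hpl" using that z0 unfolding q S_def Hpl_def by auto
    hence "Re (log_Kt t (z0, hor (Complex x y) th (- \<i> * of_real t)))
        = ln (cmod (Kt t z0 (hor (Complex x y) th (- \<i> * of_real t))))"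
      using t by (intro Re_log_Kt hor_mem_G1) auto
    thus ?thesis using norm_Kt[of z0 "Complex x y"] that z0 C unfolding q S_def by (simp add: ln_mult)
  qed
  have L_deriv: "((\<lambda>w. ln C + model_log t w) has_derivative
      (\<lambda>k. model_log_du t (rot_inv th (rel_pos z0 q)) * Re k + model_log_dv t (rot_inv th (rel_pos z0 q)) * Im k))
      (at (rot_inv th (rel_pos z0 q)))" if "q \<in> S" for q
    using has_derivative_add[OF has_derivative_const model_log_has_derivative[OF t Im_rot_inv_pos[OF rel_pos[OF that]]]]
    by simp
  have W_deriv: "((\<lambda>q. rot_inv th (rel_pos z0 q)) has_derivative
      (\<lambda>h. - 1 / (\<gamma> (rel_pos z0 q))^2 / of_real (snd q) * (of_real (fst h) + rel_pos z0 q * of_real (snd h)))) (at q)"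
    if "q \<in> S" for q
    unfolding \<gamma>_def using that rel_pos[OF that] unfolding S_def
    by (intro has_derivative_rot_inv_rel_pos) auto
  have "\<exists>K. ((\<lambda>q. - 1 / (\<gamma> (rel_pos z0 q))^2 / of_real (snd q)) has_derivative K) (at p)"
    using \<gamma>_p snd_p unfolding \<gamma>_def rel_pos_def[abs_def] by (intro exI) (auto intro!: derivative_eq_intros)
  then obtain K where K: "((\<lambda>q. - 1 / (\<gamma> (rel_pos z0 q))^2 / of_real (snd q)) has_derivative K) (at p)" ..
  have rel_pos_p: "rel_pos z0 p = \<i>" unfolding p_def rel_pos_def using z0 by (simp add: complex_eq_iff)
  show ?thesis unfolding p_def[symmetric]
    by (rule nondeg_hessian_at_comp_conformal[where S = S and L = "\<lambda>w. ln C + model_log t w"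
          and W = "\<lambda>q. rot_inv th (rel_pos z0 q)" and \<mu> = "rel_pos z0"
          and \<kappa> = "\<lambda>q. - 1 / (\<gamma> (rel_pos z0 q))^2 / of_real (snd q)"
          and Lu = "model_log_du t" and Lv = "model_log_dv t" and a = a and b = b])
      (use \<open>open S\<close> \<open>p \<in> S\<close> g_eq L_deriv W_deriv K has_derivative_rel_pos[OF snd_p] \<gamma>_p snd_p
         \<open>a < 0\<close> \<open>b < 0\<close> a b model_log_dv_i[OF t] in \<open>auto simp: rel_pos_p rot_inv_i model_log_du_i\<close>)
qed

theorem lemma1:
  fixes t :: real
  assumes "0 < t" and "t < 1"
  shows "(\<exists>\<Phi> :: complex \<times> cpt \<Rightarrow> complex.
            continuous_on (Hpl \<times> G1) \<Phi> \<and>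
            (\<forall>z\<in>Hpl. \<forall>P\<in>G1. exp (\<Phi> (z, P)) = Kt t z P) \<and>
            (\<forall>z0\<in>Hpl. \<forall>th :: real.
               nondeg_hessian_at
                 (\<lambda>(x, y). Re (\<Phi> (z0, hor (Complex x y) th (- \<i> * of_real t))))
                 (Re z0, Im z0)))
       \<and> (\<forall>z\<in>Hpl. \<forall>th :: real.
            hor z th (- \<i> * of_real t) \<in> Sigma_ht t th \<and>
            (\<forall>P\<in>Sigma_ht t th. cmod (Kt t z P) \<le> cmod (Kt t z (hor z th (- \<i> * of_real t)))))"
proof (intro conjI exI[of _ "log_Kt t"] ballI allI)
  show "continuous_on (Hpl \<times> G1) (log_Kt t)" by (rule continuous_on_log_Kt)
  show "exp (log_Kt t (z, P)) = Kt t z P" if "z \<in> Hpl" "P \<in> G1" for z P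
    using exp_log_Kt[OF that] .
  show "nondeg_hessian_at (\<lambda>(x, y). Re (log_Kt t (z0, hor (Complex x y) th (- \<i> * of_real t)))) (Re z0, Im z0)"
    if "z0 \<in> Hpl" for z0 th
    using nondeg_hessian_log_Kt assms that unfolding Hpl_def by blast
  show "hor z th (- \<i> * of_real t) \<in> Sigma_ht t th" if "z \<in> Hpl" for z th
    using that unfolding Sigma_ht_def by blast
  show "cmod (Kt t z P) \<le> cmod (Kt t z (hor z th (- \<i> * of_real t)))"
    if "z \<in> Hpl" "P \<in> Sigma_ht t th" for z th P
    using norm_Kt_le_hor[OF assms that] .
qed

end
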